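(* Let $n\ge2$, $\alpha\in(-n,0)$ and let $\phi$ be a Young function. (i) If $\underline\Lambda_\phi(\alpha)<\infty$, then $$\phi(xs)\le 2^{2n}\underline\Lambda_\phi(\alpha)\,\phi(2^{1-\alpha}x)\,s^{n/(1-\alpha)}\quad\forall\,0<s\le1,\ x>0.$$ (ii) If $\overline\Lambda_\phi(\alpha)<\infty$, then for every $x>0$, $\phi(xs^{-\alpha})s^{-n}\to0$ as $s\to\infty$, and $$\phi(xs)\le 2^{3n}\overline\Lambda_\phi(\alpha)\,\phi(x)\,s^{-n/\alpha}\quad\forall\,s\ge1,\ x>0.$$
   Context: A Young function is $\phi\in C([0,\infty))$, convex, with $\phi(0)=0$, $\phi(t)>0$ for $t>0$, $\lim_{t\to\infty}\phi(t)=\infty$. $\underline\Lambda_\phi(\alpha):=\sup_{x>0}\int_0^1\frac{\phi(t^{1-\alpha}x)}{\phi(x)}\frac{dt}{t^{n+1}}$, $\overline\Lambda_\phi(\alpha):=\sup_{x>0}\int_1^\infty\frac{\phi(t^{-\alpha}x)}{\phi(x)}\frac{dt}{t^{n+1}}$. *)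

theory Defs
  imports "HOL-Analysis.Analysis"
begin

definition young_function :: "(real \<Rightarrow> real) \<Rightarrow> bool" where
  "young_function \<phi> \<longleftrightarrow>
     continuous_on {0..} \<phi> \<and> convex_on {0..} \<phi> \<and> \<phi> 0 = 0 \<and>
     (\<forall>t>0. \<phi> t > 0) \<and> filterlim \<phi> at_top at_top"

definition Lambda_lower :: "nat \<Rightarrow> (real \<Rightarrow> real) \<Rightarrow> real \<Rightarrow> ennreal" where
  "Lambda_lower n \<phi> \<alpha> = (SUP x\<in>{0<..}.
      \<integral>\<^sup>+ t\<in>{0<..1}. ennreal (\<phi> (t powr (1 - \<alpha>) * x) / \<phi> x / t ^ (n + 1)) \<partial>lborel)"

definition Lambda_upper :: "nat \<Rightarrow> (real \<Rightarrow> real) \<Rightarrow> real \<Rightarrow> ennreal" where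
  "Lambda_upper n \<phi> \<alpha> = (SUP x\<in>{0<..}.
      \<integral>\<^sup>+ t\<in>{1..}. ennreal (\<phi> (t powr (- \<alpha>) * x) / \<phi> x / t ^ (n + 1)) \<partial>lborel)"

end

(*
  Since a Young function is nondecreasing on [0,\<infinity>), on a dyadic block [r, 2r] the integrand
  defining \<Lambda> is at least \<phi>(r^p y) / (\<phi> y (2r)^(n+1)); hence the block alone contributes
  \<phi>(r^p y) / (2^(n+1) r^n \<phi> y) \<le> \<Lambda>.  Choosing r with (2r)^(1-\<alpha>) = s, resp. r^(-\<alpha>) = s,
  gives the two growth bounds.  For the limit, the block [s, 2s] bounds \<phi>(x s^(-\<alpha>)) s^(-n)
  by a multiple of the tail over [s, \<infinity>) of a finite integral, which tends to 0.
*)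
theory Submission
  imports Defs
begin

lemma young_function_pos: "young_function \<phi> \<Longrightarrow> 0 < t \<Longrightarrow> 0 < \<phi> t"
  unfolding young_function_def by blast

lemma young_function_nonneg: "young_function \<phi> \<Longrightarrow> 0 \<le> t \<Longrightarrow> 0 \<le> \<phi> t"
  unfolding young_function_def by (metis order.order_iff_strict)

lemma young_function_mono:
  assumes "young_function \<phi>" "0 \<le> a" "a \<le> b"
  shows "\<phi> a \<le> \<phi> b"
proof (cases "b = 0")
  case True
  then show ?thesis using assms by simp
next
  case False
  then have "0 < b" using assms by simp
  have "convex_on {0..} \<phi>" "\<phi> 0 = 0"
    using assms(1) unfolding young_function_def by auto
  then have "\<phi> ((1 - a/b) *\<^sub>R 0 + (a/b) *\<^sub>R b) \<le> (1 - a/b) * \<phi> 0 + (a/b) * \<phi> b"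
    using assms \<open>0 < b\<close> by (intro convex_onD) auto
  then have "\<phi> a \<le> (a/b) * \<phi> b" using \<open>0 < b\<close> \<open>\<phi> 0 = 0\<close> by simp
  also have "\<dots> \<le> \<phi> b"
    using assms \<open>0 < b\<close> young_function_pos[OF assms(1) \<open>0 < b\<close>]
    by (intro mult_left_le_one_le) auto
  finally show ?thesis .
qed

lemma le_mult_enn2real_if_ennreal_divide_le:
  fixes a c :: real
  assumes "ennreal (a / c) \<le> L" "L < \<infinity>" "0 < c"
  shows "a \<le> c * enn2real L"
proof -
  have "L < top" using assms(2) by simp
  then have "a / c \<le> enn2real L"
    using enn2real_mono[OF assms(1)] enn2real_nonneg[of L]
    by (metis enn2real_ennreal linorder_not_le order.trans less_imp_le)
  then show ?thesis using assms(3) by (simp add: divide_le_eq mult.commute)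
qed

lemma nn_integral_ge_dyadic_block:
  fixes G :: "real \<Rightarrow> real" and n :: nat
  assumes "0 < r" "{r..2 * r} \<subseteq> A" "0 \<le> G r" "\<And>t. t \<in> {r..2 * r} \<Longrightarrow> G r \<le> G t"
  shows "ennreal (G r / (2 ^ (n + 1) * r ^ n)) \<le> (\<integral>\<^sup>+ t\<in>A. ennreal (G t / t ^ (n + 1)) \<partial>lborel)"
proof -
  have "G r / (2 ^ (n + 1) * r ^ n) = G r / (2 * r) ^ (n + 1) * r"
    using assms(1) by (simp add: power_mult_distrib)
  also have "ennreal \<dots> = ennreal (G r / (2 * r) ^ (n + 1)) * emeasure lborel {r..2 * r}"
    using assms(1,3) by (subst ennreal_mult) auto
  also have "\<dots> = (\<integral>\<^sup>+ t. ennreal (G r / (2 * r) ^ (n + 1)) * indicator {r..2 * r} t \<partial>lborel)"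
    by (simp add: nn_integral_cmult_indicator)
  also have "\<dots> \<le> (\<integral>\<^sup>+ t\<in>A. ennreal (G t / t ^ (n + 1)) \<partial>lborel)"
  proof (rule nn_integral_mono)
    have "G r / (2 * r) ^ (n + 1) \<le> G t / t ^ (n + 1)" if "t \<in> {r..2 * r}" for t
      using assms(1,3) assms(4)[OF that] that by (intro frac_le power_mono) auto
    then show "ennreal (G r / (2 * r) ^ (n + 1)) * indicator {r..2 * r} t
        \<le> ennreal (G t / t ^ (n + 1)) * indicator A t" for t
      using assms(2) by (auto simp: indicator_def intro: ennreal_leI)
  qed
  finally show ?thesis .
qed

lemma young_function_dilation_le_nn_integral:
  fixes n :: nat
  assumes "young_function \<phi>" "0 \<le> p" "0 < r" "0 < y" "{r..2 * r} \<subseteq> A"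
  shows "ennreal (\<phi> (r powr p * y) / \<phi> y / (2 ^ (n + 1) * r ^ n))
    \<le> (\<integral>\<^sup>+ t\<in>A. ennreal (\<phi> (t powr p * y) / \<phi> y / t ^ (n + 1)) \<partial>lborel)"
proof (rule nn_integral_ge_dyadic_block[where G = "\<lambda>t. \<phi> (t powr p * y) / \<phi> y"])
  show "0 \<le> \<phi> (r powr p * y) / \<phi> y"
    using assms by (simp add: young_function_nonneg[OF assms(1)])
  show "\<phi> (r powr p * y) / \<phi> y \<le> \<phi> (t powr p * y) / \<phi> y" if "t \<in> {r..2 * r}" for t
  proof -
    have "r powr p * y \<le> t powr p * y"
      using that assms by (intro mult_right_mono powr_mono2) auto
    then have "\<phi> (r powr p * y) \<le> \<phi> (t powr p * y)"
      using assms by (intro young_function_mono[OF assms(1)]) auto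
    then show ?thesis
      using young_function_pos[OF assms(1,4)] by (intro divide_right_mono) auto
  qed
qed (use assms in auto)

lemma young_function_dilation_le_Lambda_lower:
  assumes "young_function \<phi>" "\<alpha> \<le> 1" "Lambda_lower n \<phi> \<alpha> < \<infinity>" "0 < r" "r \<le> 1/2" "0 < y"
  shows "\<phi> (r powr (1 - \<alpha>) * y) \<le> 2 ^ (n + 1) * r ^ n * \<phi> y * enn2real (Lambda_lower n \<phi> \<alpha>)"
proof -
  have "{r..2 * r} \<subseteq> {0<..1}" using assms by auto
  then have "ennreal (\<phi> (r powr (1 - \<alpha>) * y) / \<phi> y / (2 ^ (n + 1) * r ^ n))
      \<le> (\<integral>\<^sup>+ t\<in>{0<..1}. ennreal (\<phi> (t powr (1 - \<alpha>) * y) / \<phi> y / t ^ (n + 1)) \<partial>lborel)"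
    using assms by (intro young_function_dilation_le_nn_integral) auto
  also have "\<dots> \<le> Lambda_lower n \<phi> \<alpha>"
    unfolding Lambda_lower_def using assms(6) by (intro SUP_upper) simp
  finally have "ennreal (\<phi> (r powr (1 - \<alpha>) * y) / (2 ^ (n + 1) * r ^ n * \<phi> y)) \<le> Lambda_lower n \<phi> \<alpha>"
    by (simp add: ac_simps)
  then show ?thesis
    using assms by (intro le_mult_enn2real_if_ennreal_divide_le) (simp_all add: young_function_pos[OF assms(1)])
qed

lemma young_function_dilation_le_Lambda_upper:
  assumes "young_function \<phi>" "\<alpha> \<le> 0" "Lambda_upper n \<phi> \<alpha> < \<infinity>" "1 \<le> r" "0 < x"
  shows "\<phi> (r powr (- \<alpha>) * x) \<le> 2 ^ (n + 1) * r ^ n * \<phi> x * enn2real (Lambda_upper n \<phi> \<alpha>)"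
proof -
  have "{r..2 * r} \<subseteq> {1..}" using assms by auto
  then have "ennreal (\<phi> (r powr (- \<alpha>) * x) / \<phi> x / (2 ^ (n + 1) * r ^ n))
      \<le> (\<integral>\<^sup>+ t\<in>{1..}. ennreal (\<phi> (t powr (- \<alpha>) * x) / \<phi> x / t ^ (n + 1)) \<partial>lborel)"
    using assms by (intro young_function_dilation_le_nn_integral) auto
  also have "\<dots> \<le> Lambda_upper n \<phi> \<alpha>"
    unfolding Lambda_upper_def using assms(5) by (intro SUP_upper) simp
  finally have "ennreal (\<phi> (r powr (- \<alpha>) * x) / (2 ^ (n + 1) * r ^ n * \<phi> x)) \<le> Lambda_upper n \<phi> \<alpha>"
    by (simp add: ac_simps)
  then show ?thesis
    using assms by (intro le_mult_enn2real_if_ennreal_divide_le) (simp_all add: young_function_pos[OF assms(1)])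
qed

lemma nn_integral_tail_tendsto_0:
  fixes f :: "real \<Rightarrow> ennreal"
  assumes [measurable]: "f \<in> borel_measurable borel" and finite: "(\<integral>\<^sup>+ t. f t \<partial>lborel) < \<infinity>"
  shows "((\<lambda>s. \<integral>\<^sup>+ t\<in>{s..}. f t \<partial>lborel) \<longlongrightarrow> 0) at_top"
proof (rule order_tendstoI)
  fix e :: ennreal assume "0 < e"
  define u where "u k t = f t * indicator {real k..} t" for k t
  have "(INF k. integral\<^sup>N lborel (u k)) = (\<integral>\<^sup>+ t. (INF k. u k t) \<partial>lborel)"
  proof (rule nn_integral_monotone_convergence_INF_decseq[symmetric])
    show "decseq u"
      by (rule decseq_SucI) (auto simp: le_fun_def u_def indicator_def)
    show "integral\<^sup>N lborel (u k) < \<infinity>" for k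
    proof -
      have "integral\<^sup>N lborel (u k) \<le> integral\<^sup>N lborel f"
        by (rule nn_integral_mono) (simp add: u_def indicator_def)
      then show ?thesis using finite by (rule le_less_trans)
    qed
    show "u k \<in> borel_measurable lborel" for k
      unfolding u_def by (intro borel_measurable_times_ennreal assms(1) borel_measurable_indicator) measurable
  qed
  also have "(\<lambda>t. INF k. u k t) = (\<lambda>t. 0)"
  proof
    fix t obtain k where "t < real k" using reals_Archimedean2 by blast
    then have "u k t = 0" by (simp add: u_def)
    then show "(INF k. u k t) = 0"
      by (metis INF_lower UNIV_I le_zero_eq)
  qed
  finally have "(INF k. integral\<^sup>N lborel (u k)) < e" using \<open>0 < e\<close> by simp
  then obtain k where "integral\<^sup>N lborel (u k) < e" by (auto simp: INF_less_iff)
  moreover have "(\<integral>\<^sup>+ t\<in>{s..}. f t \<partial>lborel) \<le> integral\<^sup>N lborel (u k)" if "real k \<le> s" for s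
    using that by (auto simp: u_def indicator_def intro!: nn_integral_mono)
  ultimately show "\<forall>\<^sub>F s in at_top. (\<integral>\<^sup>+ t\<in>{s..}. f t \<partial>lborel) < e"
    by (auto simp: eventually_at_top_linorder intro: le_less_trans)
qed simp

lemma Lambda_lower_finite_imp_growth_bound:
  fixes n :: nat
  assumes "young_function \<phi>" "1 \<le> n" "\<alpha> < 1" "Lambda_lower n \<phi> \<alpha> < \<infinity>" "0 < s" "s \<le> 1" "0 < x"
  shows "\<phi> (x * s) \<le> 2 ^ (2 * n) * enn2real (Lambda_lower n \<phi> \<alpha>)
    * \<phi> (2 powr (1 - \<alpha>) * x) * s powr (real n / (1 - \<alpha>))"
proof -
  define \<Lambda> where "\<Lambda> = enn2real (Lambda_lower n \<phi> \<alpha>)"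
  define y where "y = 2 powr (1 - \<alpha>) * x"
  define r where "r = s powr (1 / (1 - \<alpha>)) / 2"
  have "0 < r" "r \<le> 1/2"
    using assms by (auto simp: r_def powr_le1)
  have "r powr (1 - \<alpha>) * y = x * s"
    using assms by (simp add: r_def y_def powr_divide powr_powr)
  moreover have "2 ^ (n + 1) * r ^ n = 2 * s powr (real n / (1 - \<alpha>))"
    using assms by (simp add: r_def power_divide powr_realpow[symmetric] powr_powr)
  ultimately have "\<phi> (x * s) \<le> 2 * (\<Lambda> * \<phi> y * s powr (real n / (1 - \<alpha>)))"
    using young_function_dilation_le_Lambda_lower[OF assms(1) _ assms(4) \<open>0 < r\<close> \<open>r \<le> 1/2\<close>, of y]
      assms by (simp add: \<Lambda>_def y_def ac_simps)
  also have "\<dots> \<le> 2 ^ (2 * n) * (\<Lambda> * \<phi> y * s powr (real n / (1 - \<alpha>)))"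
  proof (rule mult_right_mono)
    show "(2::real) \<le> 2 ^ (2 * n)"
      using power_increasing[of 1 "2 * n" "2::real"] assms(2) by simp
    show "0 \<le> \<Lambda> * \<phi> y * s powr (real n / (1 - \<alpha>))"
      using assms by (simp add: \<Lambda>_def y_def young_function_nonneg[OF assms(1)])
  qed
  finally show ?thesis by (simp add: \<Lambda>_def y_def ac_simps)
qed

lemma Lambda_upper_finite_imp_growth_bound:
  fixes n :: nat
  assumes "young_function \<phi>" "1 \<le> n" "\<alpha> < 0" "Lambda_upper n \<phi> \<alpha> < \<infinity>" "1 \<le> s" "0 < x"
  shows "\<phi> (x * s) \<le> 2 ^ (3 * n) * enn2real (Lambda_upper n \<phi> \<alpha>) * \<phi> x * s powr (- real n / \<alpha>)"
proof -
  define \<Lambda> where "\<Lambda> = enn2real (Lambda_upper n \<phi> \<alpha>)"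
  define r where "r = s powr (- 1 / \<alpha>)"
  have "1 \<le> r"
    using assms by (auto simp: r_def divide_simps intro: ge_one_powr_ge_zero)
  have "r powr (- \<alpha>) * x = x * s"
    using assms by (simp add: r_def powr_powr)
  moreover have "r ^ n = s powr (- real n / \<alpha>)"
    using assms by (simp add: r_def powr_realpow[symmetric] powr_powr)
  ultimately have "\<phi> (x * s) \<le> 2 ^ (n + 1) * (\<Lambda> * \<phi> x * s powr (- real n / \<alpha>))"
    using young_function_dilation_le_Lambda_upper[OF assms(1) _ assms(4) \<open>1 \<le> r\<close> assms(6)] assms
    by (simp add: \<Lambda>_def ac_simps)
  also have "\<dots> \<le> 2 ^ (3 * n) * (\<Lambda> * \<phi> x * s powr (- real n / \<alpha>))"
    using assms by (intro mult_right_mono power_increasing) (auto simp: \<Lambda>_def young_function_nonneg[OF assms(1)])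
  finally show ?thesis by (simp add: \<Lambda>_def ac_simps)
qed

lemma Lambda_upper_finite_imp_tendsto_0:
  fixes n :: nat
  assumes "young_function \<phi>" "\<alpha> \<le> 0" "Lambda_upper n \<phi> \<alpha> < \<infinity>" "0 < x"
  shows "((\<lambda>s. \<phi> (x * s powr (- \<alpha>)) * s powr (- real n)) \<longlongrightarrow> 0) at_top"
proof -
  define h where "h t = \<phi> (t powr (- \<alpha>) * x) / \<phi> x / t ^ (n + 1)" for t
  define f where "f t = ennreal (h t) * indicator {1..} t" for t
  define T where "T s = (\<integral>\<^sup>+ t\<in>{s..}. f t \<partial>lborel)" for s
  have "continuous_on {1..} h"
  proof -
    have "continuous_on {0..} \<phi>" using assms(1) by (simp add: young_function_def)
    moreover have "continuous_on {1..} (\<lambda>t. t powr (- \<alpha>) * x)"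
      by (intro continuous_intros) auto
    ultimately have "continuous_on {1..} (\<lambda>t. \<phi> (t powr (- \<alpha>) * x))"
      by (rule continuous_on_compose2) (use assms in auto)
    then show ?thesis
      unfolding h_def using young_function_pos[OF assms(1,4)] by (intro continuous_intros) auto
  qed
  then have "(\<lambda>t. indicator {1..} t *\<^sub>R h t) \<in> borel_measurable borel"
    by (intro borel_measurable_continuous_on_indicator) auto
  moreover have "f = (\<lambda>t. ennreal (indicator {1..} t *\<^sub>R h t))"
    by (auto simp: f_def indicator_def)
  ultimately have "f \<in> borel_measurable borel" by simp
  moreover have "(\<integral>\<^sup>+ t. f t \<partial>lborel) \<le> Lambda_upper n \<phi> \<alpha>"
    unfolding f_def h_def Lambda_upper_def using assms(4) by (intro SUP_upper) (simp add: mult.commute)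
  ultimately have "(T \<longlongrightarrow> 0) at_top"
    unfolding T_def using assms(3) by (intro nn_integral_tail_tendsto_0) auto
  then have "((\<lambda>s. enn2real (T s)) \<longlongrightarrow> 0) at_top"
    using tendsto_enn2real[of T 0 at_top] by simp
  then have upper: "((\<lambda>s. 2 ^ (n + 1) * \<phi> x * enn2real (T s)) \<longlongrightarrow> 0) at_top"
    by (rule tendsto_mult_right_zero)
  have bound: "\<phi> (x * s powr (- \<alpha>)) * s powr (- real n) \<le> 2 ^ (n + 1) * \<phi> x * enn2real (T s)"
    if "1 \<le> s" for s
  proof (rule le_mult_enn2real_if_ennreal_divide_le)
    have "\<phi> (x * s powr (- \<alpha>)) * s powr (- real n) / (2 ^ (n + 1) * \<phi> x)
        = \<phi> (s powr (- \<alpha>) * x) / \<phi> x / (2 ^ (n + 1) * s ^ n)"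
      using that by (simp add: powr_minus powr_realpow field_simps)
    also have "ennreal \<dots> \<le> (\<integral>\<^sup>+ t\<in>{s..}. ennreal (h t) \<partial>lborel)"
      unfolding h_def using assms that by (intro young_function_dilation_le_nn_integral) auto
    also have "\<dots> = T s"
      unfolding T_def f_def using that by (intro nn_integral_cong) (auto simp: indicator_def)
    finally show "ennreal (\<phi> (x * s powr (- \<alpha>)) * s powr (- real n) / (2 ^ (n + 1) * \<phi> x)) \<le> T s" .
    have "T s \<le> (\<integral>\<^sup>+ t. f t \<partial>lborel)"
      unfolding T_def by (intro nn_integral_mono) (simp add: indicator_def)
    then show "T s < \<infinity>"
      using \<open>(\<integral>\<^sup>+ t. f t \<partial>lborel) \<le> Lambda_upper n \<phi> \<alpha>\<close> assms(3) by (simp add: le_less_trans)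
  qed (use young_function_pos[OF assms(1,4)] in simp)
  show ?thesis
  proof (rule tendsto_sandwich[OF _ _ tendsto_const upper])
    show "\<forall>\<^sub>F s in at_top. 0 \<le> \<phi> (x * s powr (- \<alpha>)) * s powr (- real n)"
      using assms(4) by (intro always_eventually allI mult_nonneg_nonneg young_function_nonneg[OF assms(1)]) auto
    show "\<forall>\<^sub>F s in at_top. \<phi> (x * s powr (- \<alpha>)) * s powr (- real n) \<le> 2 ^ (n + 1) * \<phi> x * enn2real (T s)"
      using bound by (auto simp: eventually_at_top_linorder)
  qed
qed

theorem lemma2p1:
  fixes n :: nat and \<alpha> :: real and \<phi> :: "real \<Rightarrow> real"
  assumes "n \<ge> 2" and "- real n < \<alpha>" and "\<alpha> < 0" and "young_function \<phi>"
  shows "(Lambda_lower n \<phi> \<alpha> < \<infinity> \<longrightarrow>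
           (\<forall>s x. 0 < s \<and> s \<le> 1 \<and> 0 < x \<longrightarrow>
              \<phi> (x * s) \<le> 2 ^ (2 * n) * enn2real (Lambda_lower n \<phi> \<alpha>)
                 * \<phi> (2 powr (1 - \<alpha>) * x) * s powr (real n / (1 - \<alpha>))))
       \<and> (Lambda_upper n \<phi> \<alpha> < \<infinity> \<longrightarrow>
           (\<forall>x>0. ((\<lambda>s. \<phi> (x * s powr (- \<alpha>)) * s powr (- real n)) \<longlongrightarrow> 0) at_top) \<and>
           (\<forall>s x. 1 \<le> s \<and> 0 < x \<longrightarrow>
              \<phi> (x * s) \<le> 2 ^ (3 * n) * enn2real (Lambda_upper n \<phi> \<alpha>)
                 * \<phi> x * s powr (- real n / \<alpha>)))"
proof -
  have "1 \<le> n" "\<alpha> < 1" "\<alpha> \<le> 0" using assms(1,3) by simp_all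
  then show ?thesis
    using Lambda_lower_finite_imp_growth_bound[OF assms(4) \<open>1 \<le> n\<close> \<open>\<alpha> < 1\<close>]
      Lambda_upper_finite_imp_growth_bound[OF assms(4) \<open>1 \<le> n\<close> assms(3)]
      Lambda_upper_finite_imp_tendsto_0[OF assms(4) \<open>\<alpha> \<le> 0\<close>]
    by blast
qed

end
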